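(* Let $(X,\le,\ast)$ be a semiframe and let $x\in X$ with $x\neq\bot_X$. The following are equivalent: (1) $x$ is transitive; (2) $x^\ast$ is a completely prime semifilter (an abstract point); (3) $x^\ast$ is a semifilter; (4) $x^\ast$ is compatible; (5) $x^\ast$ is a maximal semifilter.
   Context: A semiframe is a triple $(X,\le,\ast)$ where $(X,\le)$ is a complete join-semilattice (every subset $Y$ has a join $\bigvee Y$; $\bot_X=\bigvee\varnothing$, $\top_X=\bigvee X$) and $\ast\subseteq X\times X$ is a compatibility relation: commutative; $x\ast x$ for every $x\neq\bot_X$; and $x\ast\bigvee Y$ iff $x\ast y$ for some $y\in Y$. A subset $F\subseteq X$ is compatible when $y\ast y'$ for all $y,y'\in F$; up-closed when $y\in F$, $y\le y'$ imply $y'\in F$; a semifilter is a nonempty up-closed compatible subset; it is completely prime when for every (possibly empty) $Y\subseteq X$, $\bigvee Y\in F$ implies $y\in F$ for some $y\in Y$; it is maximal when contained in no strictly larger semifilter. An abstract point is a completely prime semifilter. $x^\ast=\{x'\in X\mid x'\ast x\}$. An element $x$ is transitive when $x\neq\bot_X$ and for all $x',x''$, $x'\ast x$ and $x\ast x''$ imply $x'\ast x''$. *)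

theory Defs
  imports Main
begin

text \<open>A complete join-semilattice is the same thing as a complete lattice; we take the
carrier to be a type of class complete_lattice, with joins given by Sup.
A semiframe is then determined by its compatibility relation.\<close>

definition semiframe :: "('a::complete_lattice \<Rightarrow> 'a \<Rightarrow> bool) \<Rightarrow> bool" where
  "semiframe cmp \<longleftrightarrow>
     (\<forall>x y. cmp x y \<longrightarrow> cmp y x) \<and>
     (\<forall>x. x \<noteq> bot \<longrightarrow> cmp x x) \<and>
     (\<forall>x Y. cmp x (Sup Y) \<longleftrightarrow> (\<exists>y\<in>Y. cmp x y))"

definition compatible_set :: "('a \<Rightarrow> 'a \<Rightarrow> bool) \<Rightarrow> 'a set \<Rightarrow> bool" where
  "compatible_set cmp F \<longleftrightarrow> (\<forall>y\<in>F. \<forall>y'\<in>F. cmp y y')"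

definition up_closed :: "'a::order set \<Rightarrow> bool" where
  "up_closed F \<longleftrightarrow> (\<forall>y y'. y \<in> F \<longrightarrow> y \<le> y' \<longrightarrow> y' \<in> F)"

definition semifilter :: "('a::order \<Rightarrow> 'a \<Rightarrow> bool) \<Rightarrow> 'a set \<Rightarrow> bool" where
  "semifilter cmp F \<longleftrightarrow> F \<noteq> {} \<and> up_closed F \<and> compatible_set cmp F"

definition completely_prime :: "'a::complete_lattice set \<Rightarrow> bool" where
  "completely_prime F \<longleftrightarrow> (\<forall>Y. Sup Y \<in> F \<longrightarrow> (\<exists>y\<in>Y. y \<in> F))"

definition abstract_point :: "('a::complete_lattice \<Rightarrow> 'a \<Rightarrow> bool) \<Rightarrow> 'a set \<Rightarrow> bool" where
  "abstract_point cmp F \<longleftrightarrow> semifilter cmp F \<and> completely_prime F"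

definition maximal_semifilter :: "('a::order \<Rightarrow> 'a \<Rightarrow> bool) \<Rightarrow> 'a set \<Rightarrow> bool" where
  "maximal_semifilter cmp F \<longleftrightarrow>
     semifilter cmp F \<and> (\<forall>G. semifilter cmp G \<longrightarrow> F \<subseteq> G \<longrightarrow> G = F)"

definition compat_set :: "('a \<Rightarrow> 'a \<Rightarrow> bool) \<Rightarrow> 'a \<Rightarrow> 'a set" where
  "compat_set cmp x = {x'. cmp x' x}"

definition transitive_elem :: "('a::complete_lattice \<Rightarrow> 'a \<Rightarrow> bool) \<Rightarrow> 'a \<Rightarrow> bool" where
  "transitive_elem cmp x \<longleftrightarrow> x \<noteq> bot \<and>
     (\<forall>x' x''. cmp x' x \<longrightarrow> cmp x x'' \<longrightarrow> cmp x' x'')"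

end

theory Submission
  imports Defs
begin

text \<open>Since the compatibility relation distributes over joins, \<open>x\<^sup>*\<close> is always
nonempty, up-closed and completely prime, so the only question is whether it is compatible;
and compatibility of \<open>x\<^sup>*\<close> is transitivity of \<open>x\<close> read through symmetry. Maximality is
automatic because \<open>x \<in> x\<^sup>*\<close>: any semifilter containing \<open>x\<^sup>*\<close> contains \<open>x\<close> and hence
consists of elements compatible with \<open>x\<close>.\<close>

lemma semiframe_sym: "semiframe cmp \<Longrightarrow> cmp a b \<Longrightarrow> cmp b a"
  unfolding semiframe_def by blast

lemma semiframe_refl: "semiframe cmp \<Longrightarrow> a \<noteq> bot \<Longrightarrow> cmp a a"
  unfolding semiframe_def by blast

lemma semiframe_Sup_iff: "semiframe cmp \<Longrightarrow> cmp a (Sup Y) \<longleftrightarrow> (\<exists>y\<in>Y. cmp a y)"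
  unfolding semiframe_def by blast

lemma semiframe_mono:
  assumes "semiframe cmp" and "a \<le> b" and "cmp c a"
  shows "cmp c b"
proof -
  have "cmp c (Sup {a, b})" using semiframe_Sup_iff[OF assms(1)] assms(3) by blast
  then show ?thesis using assms(2) by (simp add: sup_absorb2)
qed

lemma mem_compat_set_self: "semiframe cmp \<Longrightarrow> x \<noteq> bot \<Longrightarrow> x \<in> compat_set cmp x"
  unfolding compat_set_def by (simp add: semiframe_refl)

lemma up_closed_compat_set: "semiframe cmp \<Longrightarrow> up_closed (compat_set cmp x)"
  unfolding up_closed_def compat_set_def by (blast intro: semiframe_mono semiframe_sym)

lemma completely_prime_compat_set: "semiframe cmp \<Longrightarrow> completely_prime (compat_set cmp x)"
  unfolding completely_prime_def compat_set_def
  by (blast dest: semiframe_sym semiframe_Sup_iff[THEN iffD1])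

lemma transitive_elem_iff_compatible_compat_set:
  "semiframe cmp \<Longrightarrow> x \<noteq> bot \<Longrightarrow>
    transitive_elem cmp x \<longleftrightarrow> compatible_set cmp (compat_set cmp x)"
  unfolding transitive_elem_def compatible_set_def compat_set_def
  by (blast dest: semiframe_sym)

lemma semifilter_compat_set_iff:
  "semiframe cmp \<Longrightarrow> x \<noteq> bot \<Longrightarrow>
    semifilter cmp (compat_set cmp x) \<longleftrightarrow> compatible_set cmp (compat_set cmp x)"
  unfolding semifilter_def
  using mem_compat_set_self up_closed_compat_set by blast

lemma abstract_point_compat_set_iff:
  "semiframe cmp \<Longrightarrow> abstract_point cmp (compat_set cmp x) \<longleftrightarrow> semifilter cmp (compat_set cmp x)"
  unfolding abstract_point_def using completely_prime_compat_set by blast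

lemma semifilter_subset_compat_set:
  assumes "semifilter cmp G" and "x \<in> G"
  shows "G \<subseteq> compat_set cmp x"
  using assms unfolding semifilter_def compatible_set_def compat_set_def by blast

lemma maximal_semifilter_compat_set_iff:
  assumes "semiframe cmp" and "x \<noteq> bot"
  shows "maximal_semifilter cmp (compat_set cmp x) \<longleftrightarrow> semifilter cmp (compat_set cmp x)"
proof
  assume S: "semifilter cmp (compat_set cmp x)"
  have "G = compat_set cmp x"
    if "semifilter cmp G" and "compat_set cmp x \<subseteq> G" for G
    using that mem_compat_set_self[OF assms] semifilter_subset_compat_set by blast
  with S show "maximal_semifilter cmp (compat_set cmp x)"
    unfolding maximal_semifilter_def by blast
qed (simp add: maximal_semifilter_def)

theorem proposition9p9:
  fixes cmp :: "'a::complete_lattice \<Rightarrow> 'a \<Rightarrow> bool" and x :: 'a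
  assumes "semiframe cmp" and "x \<noteq> bot"
  shows "(transitive_elem cmp x \<longleftrightarrow> abstract_point cmp (compat_set cmp x))
       \<and> (abstract_point cmp (compat_set cmp x) \<longleftrightarrow> semifilter cmp (compat_set cmp x))
       \<and> (semifilter cmp (compat_set cmp x) \<longleftrightarrow> compatible_set cmp (compat_set cmp x))
       \<and> (compatible_set cmp (compat_set cmp x) \<longleftrightarrow> maximal_semifilter cmp (compat_set cmp x))"
  using transitive_elem_iff_compatible_compat_set[OF assms]
    abstract_point_compat_set_iff[OF assms(1)]
    semifilter_compat_set_iff[OF assms]
    maximal_semifilter_compat_set_iff[OF assms]
  by blast

end
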